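(* Let $X$ and $Y$ be real Banach spaces such that $Y$ is uniformly convex and the set of norm-attaining operators $\mathrm{NA}(\mathcal F(X),Y)$ is dense in $\mathcal L(\mathcal F(X),Y)$. Then $\mathrm{A}(X,Y)$ is dense in $\mathrm{Lip}_0(X,Y)$.
   Context: $\widetilde X=\{(x,y)\in X^2:x\neq y\}$. $\mathrm{Lip}_0(X,Y)$ is the Banach space of Lipschitz $f\colon X\to Y$ with $f(0)=0$ and norm $\|f\|=\sup_{(x,y)\in\widetilde X}\|f(x)-f(y)\|/\|x-y\|$. The Lipschitz-free space $\mathcal F(X)$ is the closed linear span of $\{\delta_x:x\in X\}$ in $\mathrm{Lip}_0(X,\mathbb R)^*$, $\delta_x(g)=g(x)$. $\mathcal L(Z,Y)$ is the space of bounded linear operators with the operator norm, and $\mathrm{NA}(Z,Y)$ the set of $T\in\mathcal L(Z,Y)$ with $\|Tz\|=\|T\|$ for some $z\in S_Z$. $\mathrm{A}(X,Y)$ is the set of $f\in\mathrm{Lip}_0(X,Y)$ for which there exist $z\in Y$ with $\|z\|=\|f\|$ and $(x_n,y_n)\in\widetilde X$ with $\frac{f(x_n)-f(y_n)}{\|x_n-y_n\|}\to z$. *)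

theory Defs
  imports "HOL-Analysis.Analysis"
begin

text \<open>Lipschitz constant (norm of Lip_0). The supremum is taken over the set
  with 0 inserted, which does not change it (all quotients are nonnegative) and
  avoids the empty supremum when X is trivial.\<close>
definition lipnorm :: "('a::real_normed_vector \<Rightarrow> 'b::real_normed_vector) \<Rightarrow> real" where
  "lipnorm f = Sup (insert 0 {norm (f x - f y) / norm (x - y) | x y. x \<noteq> y})"

definition Lip0 :: "('a::real_normed_vector \<Rightarrow> 'b::real_normed_vector) set" where
  "Lip0 = {f. f 0 = 0 \<and> (\<exists>C. C-lipschitz_on UNIV f)}"

text \<open>Functionals on Lip_0(X,R), represented as maps on ('a => real) that vanish
  outside Lip0.\<close>
definition dualnorm :: "(('a::real_normed_vector \<Rightarrow> real) \<Rightarrow> real) \<Rightarrow> real" where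
  "dualnorm \<phi> = Sup {\<bar>\<phi> g\<bar> | g. g \<in> Lip0 \<and> lipnorm g \<le> 1}"

definition dirac :: "'a::real_normed_vector \<Rightarrow> (('a \<Rightarrow> real) \<Rightarrow> real)" where
  "dirac x = (\<lambda>g. if g \<in> Lip0 then g x else 0)"

definition free_span :: "(('a::real_normed_vector \<Rightarrow> real) \<Rightarrow> real) set" where
  "free_span = {\<phi>. \<exists>n (a::nat \<Rightarrow> real) (p::nat \<Rightarrow> 'a).
                     \<phi> = (\<lambda>g. \<Sum>i<n. a i * dirac (p i) g)}"

definition free_space :: "(('a::real_normed_vector \<Rightarrow> real) \<Rightarrow> real) set" where
  "free_space = {\<phi>. (\<forall>g. g \<notin> Lip0 \<longrightarrow> \<phi> g = 0) \<and>
      (\<forall>\<epsilon>>0. \<exists>\<psi>\<in>free_span. \<forall>g\<in>Lip0. lipnorm g \<le> 1 \<longrightarrow> \<bar>\<phi> g - \<psi> g\<bar> \<le> \<epsilon>)}"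

text \<open>Bounded linear operators F(X) -> Y (only values on F(X) matter).\<close>
definition free_ops :: "((('a::real_normed_vector \<Rightarrow> real) \<Rightarrow> real) \<Rightarrow> 'b::real_normed_vector) set" where
  "free_ops = {T. (\<forall>\<phi>\<in>free_space. \<forall>\<psi>\<in>free_space. \<forall>a b.
                     T (\<lambda>g. a * \<phi> g + b * \<psi> g) = a *\<^sub>R T \<phi> + b *\<^sub>R T \<psi>) \<and>
                  (\<exists>C. \<forall>\<phi>\<in>free_space. norm (T \<phi>) \<le> C * dualnorm \<phi>)}"

definition free_opnorm :: "((('a::real_normed_vector \<Rightarrow> real) \<Rightarrow> real) \<Rightarrow> 'b::real_normed_vector) \<Rightarrow> real" where
  "free_opnorm T = Sup (insert 0 {norm (T \<phi>) | \<phi>. \<phi> \<in> free_space \<and> dualnorm \<phi> \<le> 1})"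

definition free_NA :: "((('a::real_normed_vector \<Rightarrow> real) \<Rightarrow> real) \<Rightarrow> 'b::real_normed_vector) set" where
  "free_NA = {T \<in> free_ops. \<exists>\<phi>\<in>free_space. dualnorm \<phi> = 1 \<and> norm (T \<phi>) = free_opnorm T}"

definition uniformly_convex_space :: "'b::real_normed_vector itself \<Rightarrow> bool" where
  "uniformly_convex_space _ \<longleftrightarrow> (\<forall>\<epsilon>>0. \<exists>\<delta>>0. \<forall>x y::'b. norm x \<le> 1 \<longrightarrow> norm y \<le> 1 \<longrightarrow>
      norm (x - y) \<ge> \<epsilon> \<longrightarrow> norm ((1/2) *\<^sub>R (x + y)) \<le> 1 - \<delta>)"

definition lipA :: "('a::real_normed_vector \<Rightarrow> 'b::real_normed_vector) set" where
  "lipA = {f \<in> Lip0. \<exists>z xs ys. norm z = lipnorm f \<and> (\<forall>n. xs n \<noteq> ys n) \<and>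
      ((\<lambda>n. (1 / norm (xs n - ys n)) *\<^sub>R (f (xs n) - f (ys n))) \<longlonglongrightarrow> z)}"

end

theory Submission
  imports Defs
begin

(*
  Every f in Lip_0(X,Y) extends to a bounded operator T_f on the free space F(X) with
  T_f o delta = f, and conversely R o delta is ||R||-Lipschitz for every operator R, because
  (delta x - delta y) / ||x - y|| lies in the unit ball of F(X). So a norm-attaining S close
  to T_f yields g = S o delta close to f, and it remains to see that g lies in A(X,Y).

  If S attains its norm N at mu and F is a norming functional of S mu, then pairing mu with
  F o g shows that F o g has Lipschitz constant at least N, while L(g) <= N. Hence there are
  slopes Q_n of g with ||Q_n|| <= N and F(Q_n) -> N; uniform convexity of Y forces (Q_n) to be
  Cauchy, and its limit z has ||z|| = N = L(g).
*)

section \<open>Lipschitz constants\<close>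

lemma Lip0_bdd_above_quotients:
  assumes "f \<in> Lip0"
  shows "bdd_above {norm (f x - f y) / norm (x - y) | x y. x \<noteq> y}"
proof -
  from assms obtain C where C: "C-lipschitz_on UNIV f" unfolding Lip0_def by auto
  have "norm (f x - f y) / norm (x - y) \<le> C" if "x \<noteq> y" for x y
    using lipschitz_onD[OF C, of x y] that by (simp add: dist_norm divide_le_eq mult.commute)
  then show ?thesis by (intro bdd_aboveI) blast
qed

lemma lipnorm_nonneg: "f \<in> Lip0 \<Longrightarrow> 0 \<le> lipnorm f"
  unfolding lipnorm_def by (intro cSup_upper) (auto dest: Lip0_bdd_above_quotients)

lemma Lip0_norm_diff_le:
  assumes "f \<in> Lip0"
  shows "norm (f x - f y) \<le> lipnorm f * norm (x - y)"
proof (cases "x = y")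
  case False
  have "norm (f x - f y) / norm (x - y) \<le> lipnorm f"
    unfolding lipnorm_def using Lip0_bdd_above_quotients[OF assms] False by (intro cSup_upper) auto
  then show ?thesis using False by (simp add: divide_le_eq mult.commute)
qed simp

lemma Lip0_zero: "f \<in> Lip0 \<Longrightarrow> f 0 = 0"
  unfolding Lip0_def by blast

lemma lipnorm_le:
  assumes "\<And>x y. norm (f x - f y) \<le> B * norm (x - y)" and "0 \<le> B"
  shows "lipnorm f \<le> B"
  unfolding lipnorm_def using assms by (intro cSup_least) (auto simp: divide_le_eq mult.commute)

lemma Lip0I:
  assumes "\<And>x y. norm (f x - f y) \<le> B * norm (x - y)" and "f 0 = 0"
  shows "f \<in> Lip0"
proof -
  have "norm (f x - f y) \<le> max B 0 * norm (x - y)" for x y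
    by (rule order_trans[OF assms(1)]) (simp add: mult_right_mono)
  then have "(max B 0)-lipschitz_on UNIV f" by (intro lipschitz_onI) (auto simp: dist_norm)
  then show ?thesis unfolding Lip0_def using assms(2) by blast
qed

lemma Lip0_bounded_linear_comp:
  assumes F: "bounded_linear F" and f: "f \<in> Lip0"
  shows "(\<lambda>x. F (f x)) \<in> Lip0"
proof -
  obtain K where K: "\<And>v. norm (F v) \<le> norm v * K" and "K > 0"
    using bounded_linear.pos_bounded[OF F] by blast
  have "norm (F (f x) - F (f y)) \<le> (K * lipnorm f) * norm (x - y)" for x y
  proof -
    have "norm (F (f x) - F (f y)) \<le> norm (f x - f y) * K"
      using K[of "f x - f y"] by (simp add: linear_simps(2)[OF F])
    also have "\<dots> \<le> lipnorm f * norm (x - y) * K"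
      using Lip0_norm_diff_le[OF f] \<open>K > 0\<close> by (simp add: mult_right_mono)
    finally show ?thesis by (simp add: algebra_simps)
  qed
  moreover have "F (f 0) = 0"
    using Lip0_zero[OF f] linear_simps(3)[OF F] by simp
  ultimately show ?thesis by (rule Lip0I)
qed

lemma less_lipnormE:
  assumes "f \<in> Lip0" and "0 \<le> c" and "c < lipnorm f"
  obtains x y where "x \<noteq> y" and "c * norm (x - y) < norm (f x - f y)"
proof -
  have "\<exists>r \<in> insert 0 {norm (f x - f y) / norm (x - y) | x y. x \<noteq> y}. c < r"
    using assms Lip0_bdd_above_quotients[OF assms(1)] unfolding lipnorm_def
    by (subst less_cSup_iff[symmetric]) auto
  then obtain x y where "x \<noteq> y" and "c < norm (f x - f y) / norm (x - y)"
    using assms(2) by auto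
  then show ?thesis using that by (simp add: field_simps)
qed

definition lip_ball :: "('a::real_normed_vector \<Rightarrow> real) set" where
  "lip_ball = {g \<in> Lip0. lipnorm g \<le> 1}"

lemma lip_ballI:
  assumes "\<And>x y. \<bar>g x - g y\<bar> \<le> norm (x - y)" and "g 0 = 0"
  shows "g \<in> lip_ball"
  using Lip0I[of g 1] lipnorm_le[of g 1] assms by (simp add: lip_ball_def)

lemma lip_ball_abs_diff_le:
  assumes "g \<in> lip_ball"
  shows "\<bar>g x - g y\<bar> \<le> norm (x - y)"
proof -
  have "\<bar>g x - g y\<bar> \<le> lipnorm g * norm (x - y)"
    using Lip0_norm_diff_le assms unfolding lip_ball_def by fastforce
  also have "\<dots> \<le> norm (x - y)"
    using assms unfolding lip_ball_def by (simp add: mult_left_le_one_le lipnorm_nonneg)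
  finally show ?thesis .
qed

lemma lip_ball_abs_le: "g \<in> lip_ball \<Longrightarrow> \<bar>g x\<bar> \<le> norm x"
  using lip_ball_abs_diff_le[of g x 0] Lip0_zero[of g] by (simp add: lip_ball_def)

lemma zero_in_lip_ball: "(\<lambda>_. 0) \<in> lip_ball"
  by (rule lip_ballI) auto

section \<open>Norming functionals\<close>

(* Graphs of norm-dominated linear functionals defined on subspaces; maximal ones under
   inclusion (Zorn) are total, which is the Hahn-Banach theorem. *)
definition norm_dominated_graph :: "('a::real_normed_vector \<times> real) set \<Rightarrow> bool" where
  "norm_dominated_graph G \<longleftrightarrow> subspace G \<and> (\<forall>(x, a) \<in> G. a \<le> norm x)"

lemma norm_dominated_graph_unique:
  assumes G: "norm_dominated_graph G" and "(x, a) \<in> G" and "(x, b) \<in> G"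
  shows "a = b"
proof -
  have sub: "subspace G" using G unfolding norm_dominated_graph_def by blast
  have "(0, a - b) \<in> G" "(0, b - a) \<in> G"
    using subspace_diff[OF sub assms(2,3)] subspace_diff[OF sub assms(3,2)] by simp_all
  then have "a - b \<le> 0" "b - a \<le> 0"
    using G unfolding norm_dominated_graph_def by fastforce+
  then show ?thesis by simp
qed

lemma norm_dominated_graph_extension_constant:
  assumes G: "norm_dominated_graph G"
  obtains c where "\<And>w b. (w, b) \<in> G \<Longrightarrow> b - norm (w - x0) \<le> c"
    and "\<And>w b. (w, b) \<in> G \<Longrightarrow> c \<le> norm (w + x0) - b"
proof
  have sub: "subspace G" and dom: "\<And>w b. (w, b) \<in> G \<Longrightarrow> b \<le> norm w"
    using G unfolding norm_dominated_graph_def by auto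
  have sep: "b' - norm (w' - x0) \<le> norm (w + x0) - b" if "(w, b) \<in> G" "(w', b') \<in> G" for w b w' b'
  proof -
    have "b + b' \<le> norm (w + w')"
      using dom subspace_add[OF sub that] by simp
    also have "\<dots> \<le> norm (w + x0) + norm (w' - x0)"
      using norm_triangle_ineq[of "w + x0" "w' - x0"] by simp
    finally show ?thesis by simp
  qed
  let ?L = "{b - norm (w - x0) | w b. (w, b) \<in> G}"
  have "(0, 0) \<in> G" using subspace_0[OF sub] by (simp add: zero_prod_def)
  then have ne: "?L \<noteq> {}" and bdd: "bdd_above ?L"
    using sep[OF \<open>(0, 0) \<in> G\<close>] by (force intro!: bdd_aboveI[where M="norm x0"])+
  show "b - norm (w - x0) \<le> Sup ?L" if "(w, b) \<in> G" for w b
    using that bdd by (intro cSup_upper) auto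
  show "Sup ?L \<le> norm (w + x0) - b" if "(w, b) \<in> G" for w b
    using that ne sep by (intro cSup_least) auto
qed

lemma norm_dominated_graph_extension_bound:
  assumes G: "norm_dominated_graph G"
    and lower: "\<And>w b. (w, b) \<in> G \<Longrightarrow> b - norm (w - x0) \<le> c"
    and upper: "\<And>w b. (w, b) \<in> G \<Longrightarrow> c \<le> norm (w + x0) - b"
    and "(v, a) \<in> G"
  shows "a + t * c \<le> norm (v + t *\<^sub>R x0)"
proof -
  have scaled: "((1 / s) *\<^sub>R v, (1 / s) * a) \<in> G" for s
    using G \<open>(v, a) \<in> G\<close> subspace_scale[of G "(v, a)" "1 / s"]
    unfolding norm_dominated_graph_def by simp
  consider "t = 0" | "t > 0" | "t < 0" by linarith
  then show ?thesis
  proof cases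
    case 1
    then show ?thesis using G \<open>(v, a) \<in> G\<close> unfolding norm_dominated_graph_def by auto
  next
    case 2
    have "v + t *\<^sub>R x0 = t *\<^sub>R ((1 / t) *\<^sub>R v + x0)"
      using 2 by (simp add: algebra_simps)
    then have "norm (v + t *\<^sub>R x0) = t * norm ((1 / t) *\<^sub>R v + x0)"
      using 2 by simp
    moreover have "t * c \<le> t * (norm ((1 / t) *\<^sub>R v + x0) - (1 / t) * a)"
      using upper[OF scaled[of t]] 2 by (simp add: mult_left_mono)
    ultimately show ?thesis
      using 2 by (simp add: algebra_simps)
  next
    case 3
    have "v + t *\<^sub>R x0 = (-t) *\<^sub>R ((1 / (-t)) *\<^sub>R v - x0)"
      using 3 by (simp add: algebra_simps)
    then have "norm (v + t *\<^sub>R x0) = (-t) * norm ((1 / (-t)) *\<^sub>R v - x0)"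
      using 3 by simp
    moreover have "(-t) * ((1 / (-t)) * a - norm ((1 / (-t)) *\<^sub>R v - x0)) \<le> (-t) * c"
      using lower[OF scaled[of "-t"]] 3 by (simp add: mult_left_mono)
    ultimately show ?thesis
      using 3 by (simp add: algebra_simps)
  qed
qed

lemma norm_dominated_graph_extend:
  assumes G: "norm_dominated_graph G"
    and lower: "\<And>w b. (w, b) \<in> G \<Longrightarrow> b - norm (w - x0) \<le> c"
    and upper: "\<And>w b. (w, b) \<in> G \<Longrightarrow> c \<le> norm (w + x0) - b"
  shows "norm_dominated_graph {p + q | p q. p \<in> G \<and> q \<in> span {(x0, c)}}"
proof -
  have "\<forall>(x, a) \<in> {p + q | p q. p \<in> G \<and> q \<in> span {(x0, c)}}. a \<le> norm x"
    using norm_dominated_graph_extension_bound[OF G lower upper] by (auto simp: span_singleton)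
  moreover have "subspace {p + q | p q. p \<in> G \<and> q \<in> span {(x0, c)}}"
    using G subspace_sums[OF _ subspace_span] unfolding norm_dominated_graph_def by blast
  ultimately show ?thesis
    unfolding norm_dominated_graph_def by blast
qed

lemma norm_dominated_graph_Union_chain:
  assumes C: "C \<in> chains {G. norm_dominated_graph G}" and "C \<noteq> {}"
  shows "norm_dominated_graph (\<Union>C)"
proof -
  have dom: "\<And>G. G \<in> C \<Longrightarrow> norm_dominated_graph G"
    using chainsD2[OF C] by blast
  have "subspace (\<Union>C)"
    unfolding subspace_def
  proof (intro conjI ballI allI)
    show "0 \<in> \<Union>C" using \<open>C \<noteq> {}\<close> dom by (auto simp: norm_dominated_graph_def subspace_0)
  next
    fix p q assume "p \<in> \<Union>C" "q \<in> \<Union>C"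
    then obtain G H where "G \<in> C" "H \<in> C" "p \<in> G" "q \<in> H" by blast
    with chainsD[OF C, of G H] dom show "p + q \<in> \<Union>C"
      unfolding norm_dominated_graph_def by (metis UnionI subsetD subspace_add)
  next
    fix s p assume "p \<in> \<Union>C"
    with dom show "s *\<^sub>R p \<in> \<Union>C"
      unfolding norm_dominated_graph_def by (metis UnionE UnionI subspace_scale)
  qed
  with dom show ?thesis unfolding norm_dominated_graph_def by blast
qed

lemma norm_dominated_graph_maximal_total:
  assumes M: "norm_dominated_graph M"
    and maximal: "\<And>G. norm_dominated_graph G \<Longrightarrow> M \<subseteq> G \<Longrightarrow> G = M"
  shows "\<exists>a. (x, a) \<in> M"
proof (rule ccontr)
  assume none: "\<nexists>a. (x, a) \<in> M"
  obtain c where "\<And>w b. (w, b) \<in> M \<Longrightarrow> b - norm (w - x) \<le> c"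
    "\<And>w b. (w, b) \<in> M \<Longrightarrow> c \<le> norm (w + x) - b"
    using norm_dominated_graph_extension_constant[OF M] by blast
  then have ext: "norm_dominated_graph {p + q | p q. p \<in> M \<and> q \<in> span {(x, c)}}"
    by (rule norm_dominated_graph_extend[OF M])
  have "M \<subseteq> {p + q | p q. p \<in> M \<and> q \<in> span {(x, c)}}"
  proof
    fix p assume "p \<in> M"
    then show "p \<in> {p + q | p q. p \<in> M \<and> q \<in> span {(x, c)}}"
      by (intro CollectI exI[of _ p] exI[of _ 0]) (simp add: span_zero)
  qed
  moreover have "(x, c) = 0 + (x, c)" and "0 \<in> M" and "(x, c) \<in> span {(x, c)}"
    using M unfolding norm_dominated_graph_def by (auto intro: subspace_0 span_base)
  ultimately show False
    using maximal[OF ext] none by blast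
qed

lemma norm_dominated_graph_functional:
  assumes M: "norm_dominated_graph M" and total: "\<And>x. \<exists>a. (x, a) \<in> M"
  obtains F where "bounded_linear F" and "\<And>v. \<bar>F v\<bar> \<le> norm v" and "\<And>x. (x, F x) \<in> M"
proof -
  define F where "F x = (THE a. (x, a) \<in> M)" for x
  have FM: "(x, a) \<in> M \<longleftrightarrow> F x = a" for x a
    using total[of x] norm_dominated_graph_unique[OF M] unfolding F_def
    by (metis (mono_tags, lifting) theI)
  have sub: "subspace M" and dom: "\<And>x a. (x, a) \<in> M \<Longrightarrow> a \<le> norm x"
    using M unfolding norm_dominated_graph_def by auto
  have "linear F"
  proof
    show "F (x + y) = F x + F y" for x y
      using subspace_add[OF sub, of "(x, F x)" "(y, F y)"] FM by simp
    show "F (r *\<^sub>R x) = r *\<^sub>R F x" for r x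
      using subspace_scale[OF sub, of "(x, F x)" r] FM by simp
  qed
  have bound: "\<bar>F v\<bar> \<le> norm v" for v
    using dom[of v "F v"] dom[of "-v" "F (-v)"] linear_neg[OF \<open>linear F\<close>, of v] FM by auto
  have "bounded_linear F"
    using \<open>linear F\<close> bound by (intro bounded_linear_intro[of _ 1]) (auto simp: linear_add linear_scale)
  then show ?thesis using that bound FM by blast
qed

lemma norming_functional:
  fixes u :: "'a::real_normed_vector"
  obtains F where "bounded_linear F" and "\<And>v. \<bar>F v\<bar> \<le> norm v" and "F u = norm u"
proof -
  define G0 where "G0 = span {(u, norm u)}"
  define A where "A = {G. norm_dominated_graph G \<and> G0 \<subseteq> G}"
  have "norm_dominated_graph G0"
    using subspace_span[of "{(u, norm u)}"] unfolding norm_dominated_graph_def G0_def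
    by (auto simp: span_singleton mult_right_mono)
  then have "\<forall>C\<in>chains A. \<exists>U\<in>A. \<forall>G\<in>C. G \<subseteq> U"
    unfolding A_def
  proof (intro ballI)
    fix C assume C: "C \<in> chains {G. norm_dominated_graph G \<and> G0 \<subseteq> G}"
    then have "C \<in> chains {G. norm_dominated_graph G}"
      by (auto simp: chains_def chain_subset_def)
    then show "\<exists>U\<in>{G. norm_dominated_graph G \<and> G0 \<subseteq> G}. \<forall>G\<in>C. G \<subseteq> U"
      using chainsD2[OF C] norm_dominated_graph_Union_chain \<open>norm_dominated_graph G0\<close>
      by (cases "C = {}") blast+
  qed
  from Zorn_Lemma2[OF this] obtain M where "M \<in> A" and max: "\<forall>G\<in>A. M \<subseteq> G \<longrightarrow> G = M"
    by blast
  then have M: "norm_dominated_graph M" and "G0 \<subseteq> M" unfolding A_def by auto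
  have "\<exists>a. (x, a) \<in> M" for x
    using M max \<open>G0 \<subseteq> M\<close> unfolding A_def
    by (intro norm_dominated_graph_maximal_total[OF M]) blast
  then obtain F where "bounded_linear F" "\<And>v. \<bar>F v\<bar> \<le> norm v" and FM: "\<And>x. (x, F x) \<in> M"
    using norm_dominated_graph_functional[OF M] by blast
  moreover have "F u = norm u"
    using \<open>G0 \<subseteq> M\<close> FM norm_dominated_graph_unique[OF M, of u "F u" "norm u"]
    unfolding G0_def by (auto intro: span_base)
  ultimately show ?thesis using that by blast
qed

section \<open>Finite combinations of Dirac functionals\<close>

definition wsum :: "(real \<times> 'a) list \<Rightarrow> ('a \<Rightarrow> 'c::real_vector) \<Rightarrow> 'c" where
  "wsum m f = (\<Sum>(a, x) \<leftarrow> m. a *\<^sub>R f x)"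

lemma wsum_Nil [simp]: "wsum [] f = 0"
  by (simp add: wsum_def)

lemma wsum_Cons [simp]: "wsum ((a, x) # m) f = a *\<^sub>R f x + wsum m f"
  by (simp add: wsum_def)

lemma wsum_append [simp]: "wsum (m @ m') f = wsum m f + wsum m' f"
  by (simp add: wsum_def)

lemma wsum_scale_weights [simp]: "wsum (map (apfst ((*) c)) m) f = c *\<^sub>R wsum m f"
  by (induction m) (auto simp: scaleR_add_right)

lemma wsum_zero [simp]: "wsum m (\<lambda>_. 0) = 0"
  by (induction m) auto

lemma linear_wsum: "linear F \<Longrightarrow> F (wsum m f) = wsum m (\<lambda>x. F (f x))"
  by (induction m) (auto simp: linear_add linear_scale linear_0)

lemma wsum_upt: "wsum (map (\<lambda>i. (a i, p i)) [0..<n]) f = (\<Sum>i<n. a i *\<^sub>R f (p i))"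
  by (induction n) auto

definition wcomb :: "real \<Rightarrow> (real \<times> 'a) list \<Rightarrow> real \<Rightarrow> (real \<times> 'a) list \<Rightarrow> (real \<times> 'a) list" where
  "wcomb a m b m' = map (apfst ((*) a)) m @ map (apfst ((*) b)) m'"

lemma wsum_wcomb [simp]: "wsum (wcomb a m b m') f = a *\<^sub>R wsum m f + b *\<^sub>R wsum m' f"
  by (simp add: wcomb_def)

lemma wcomb_approx:
  fixes g :: "'a \<Rightarrow> real"
  assumes "\<bar>u - wsum m g\<bar> \<le> e" and "\<bar>v - wsum m' g\<bar> \<le> e'"
  shows "\<bar>(a * u + b * v) - wsum (wcomb a m b m') g\<bar> \<le> \<bar>a\<bar> * e + \<bar>b\<bar> * e'"
proof -
  have "\<bar>(a * u + b * v) - wsum (wcomb a m b m') g\<bar> = \<bar>a * (u - wsum m g) + b * (v - wsum m' g)\<bar>"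
    by (simp add: algebra_simps)
  also have "\<dots> \<le> \<bar>a\<bar> * \<bar>u - wsum m g\<bar> + \<bar>b\<bar> * \<bar>v - wsum m' g\<bar>"
    by (metis abs_mult abs_triangle_ineq)
  also have "\<dots> \<le> \<bar>a\<bar> * e + \<bar>b\<bar> * e'"
    using assms by (intro add_mono mult_left_mono) auto
  finally show ?thesis .
qed

lemma wsum_lip_ball_abs_le:
  "g \<in> lip_ball \<Longrightarrow> \<bar>wsum m g\<bar> \<le> (\<Sum>(a, x) \<leftarrow> m. \<bar>a\<bar> * norm x)"
proof (induction m)
  case (Cons p m)
  obtain a x where p: "p = (a, x)" by fastforce
  have "\<bar>wsum (p # m) g\<bar> = \<bar>a * g x + wsum m g\<bar>" using p by simp
  also have "\<dots> \<le> \<bar>a\<bar> * \<bar>g x\<bar> + \<bar>wsum m g\<bar>" by (metis abs_mult abs_triangle_ineq)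
  also have "\<dots> \<le> \<bar>a\<bar> * norm x + (\<Sum>(a, x) \<leftarrow> m. \<bar>a\<bar> * norm x)"
    using Cons.IH[OF Cons.prems] lip_ball_abs_le[OF Cons.prems, of x]
    by (intro add_mono mult_left_mono) auto
  finally show ?case using p by simp
qed simp

definition dirac_comb :: "(real \<times> 'a::real_normed_vector) list \<Rightarrow> ('a \<Rightarrow> real) \<Rightarrow> real" where
  "dirac_comb m g = wsum m (\<lambda>x. dirac x g)"

lemma dirac_comb_apply: "dirac_comb m g = (if g \<in> Lip0 then wsum m g else 0)"
  unfolding dirac_comb_def by (induction m) (auto simp: dirac_def)

lemma dirac_comb_upt: "dirac_comb (map (\<lambda>i. (a i, p i)) [0..<n]) = (\<lambda>g. \<Sum>i<n. a i * dirac (p i) g)"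
  by (simp add: dirac_comb_def wsum_upt fun_eq_iff)

lemma free_span_eq_range_dirac_comb: "free_span = range dirac_comb"
proof (intro set_eqI iffI)
  fix \<phi> assume "\<phi> \<in> free_span"
  then show "\<phi> \<in> range dirac_comb"
    unfolding free_span_def by (auto simp flip: dirac_comb_upt)
next
  fix \<phi> assume "\<phi> \<in> range dirac_comb"
  then obtain m where "\<phi> = dirac_comb m" by blast
  then have "\<phi> = dirac_comb (map (\<lambda>i. (fst (m ! i), snd (m ! i))) [0..<length m])"
    by (simp add: map_nth)
  then show "\<phi> \<in> free_span"
    unfolding free_span_def dirac_comb_upt
    by (intro CollectI exI[of _ "length m"] exI[of _ "\<lambda>i. fst (m ! i)"] exI[of _ "\<lambda>i. snd (m ! i)"])
qed

section \<open>The Lipschitz-free space\<close>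

lemma free_spaceI:
  assumes "\<And>g. g \<notin> Lip0 \<Longrightarrow> \<phi> g = 0"
    and "\<And>\<epsilon>. \<epsilon> > 0 \<Longrightarrow> \<exists>m. \<forall>g\<in>lip_ball. \<bar>\<phi> g - wsum m g\<bar> \<le> \<epsilon>"
  shows "\<phi> \<in> free_space"
  unfolding free_space_def free_span_eq_range_dirac_comb
proof (intro CollectI conjI allI impI)
  fix \<epsilon> :: real assume "\<epsilon> > 0"
  then obtain m where "\<forall>g\<in>lip_ball. \<bar>\<phi> g - wsum m g\<bar> \<le> \<epsilon>" using assms(2) by blast
  then show "\<exists>\<psi>\<in>range dirac_comb. \<forall>g\<in>Lip0. lipnorm g \<le> 1 \<longrightarrow> \<bar>\<phi> g - \<psi> g\<bar> \<le> \<epsilon>"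
    by (intro bexI[of _ "dirac_comb m"]) (auto simp: dirac_comb_apply lip_ball_def)
qed (use assms(1) in blast)

lemma free_space_vanishes: "\<phi> \<in> free_space \<Longrightarrow> g \<notin> Lip0 \<Longrightarrow> \<phi> g = 0"
  unfolding free_space_def by blast

lemma free_space_approx:
  assumes "\<phi> \<in> free_space" and "\<epsilon> > 0"
  obtains m where "\<forall>g\<in>lip_ball. \<bar>\<phi> g - wsum m g\<bar> \<le> \<epsilon>"
proof -
  have "\<exists>\<psi>\<in>range dirac_comb. \<forall>g\<in>Lip0. lipnorm g \<le> 1 \<longrightarrow> \<bar>\<phi> g - \<psi> g\<bar> \<le> \<epsilon>"
    using assms unfolding free_space_def free_span_eq_range_dirac_comb by simp
  then obtain m where "\<forall>g\<in>Lip0. lipnorm g \<le> 1 \<longrightarrow> \<bar>\<phi> g - dirac_comb m g\<bar> \<le> \<epsilon>"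
    by blast
  then have "\<forall>g\<in>lip_ball. \<bar>\<phi> g - wsum m g\<bar> \<le> \<epsilon>"
    by (simp add: dirac_comb_apply lip_ball_def)
  then show ?thesis by (rule that)
qed

lemma dirac_comb_in_free_space: "dirac_comb m \<in> free_space"
proof (rule free_spaceI)
  show "dirac_comb m g = 0" if "g \<notin> Lip0" for g
    using that by (simp add: dirac_comb_apply)
  show "\<exists>m'. \<forall>g\<in>lip_ball. \<bar>dirac_comb m g - wsum m' g\<bar> \<le> \<epsilon>" if "\<epsilon> > 0" for \<epsilon> :: real
    using that by (intro exI[of _ m]) (simp add: dirac_comb_apply lip_ball_def)
qed

lemma dirac_comb_Nil: "dirac_comb [] = (\<lambda>_. 0)"
  by (simp add: dirac_comb_def fun_eq_iff)

lemma dirac_eq_dirac_comb: "dirac x = dirac_comb [(1, x)]"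
  by (simp add: dirac_comb_def fun_eq_iff)

lemma dirac_in_free_space: "dirac x \<in> free_space"
  unfolding dirac_eq_dirac_comb by (rule dirac_comb_in_free_space)

lemma dirac_zero: "dirac 0 = (\<lambda>_. 0)"
  by (auto simp: dirac_def Lip0_zero)

lemma free_space_lincomb:
  assumes \<phi>: "\<phi> \<in> free_space" and \<psi>: "\<psi> \<in> free_space"
  shows "(\<lambda>g. a * \<phi> g + b * \<psi> g) \<in> free_space"
proof (rule free_spaceI)
  show "a * \<phi> g + b * \<psi> g = 0" if "g \<notin> Lip0" for g
    using free_space_vanishes[OF \<phi> that] free_space_vanishes[OF \<psi> that] by simp
next
  fix \<epsilon> :: real assume "\<epsilon> > 0"
  define \<epsilon>' where "\<epsilon>' = \<epsilon> / (\<bar>a\<bar> + \<bar>b\<bar> + 1)"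
  have "\<epsilon>' > 0" and \<epsilon>': "(\<bar>a\<bar> + \<bar>b\<bar>) * \<epsilon>' \<le> \<epsilon>"
    using \<open>\<epsilon> > 0\<close> unfolding \<epsilon>'_def by (auto simp: field_simps)
  obtain m m' where m: "\<forall>g\<in>lip_ball. \<bar>\<phi> g - wsum m g\<bar> \<le> \<epsilon>'"
    and m': "\<forall>g\<in>lip_ball. \<bar>\<psi> g - wsum m' g\<bar> \<le> \<epsilon>'"
    using free_space_approx[OF \<phi> \<open>\<epsilon>' > 0\<close>] free_space_approx[OF \<psi> \<open>\<epsilon>' > 0\<close>] by metis
  have "\<bar>(a * \<phi> g + b * \<psi> g) - wsum (wcomb a m b m') g\<bar> \<le> (\<bar>a\<bar> + \<bar>b\<bar>) * \<epsilon>'"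
    if "g \<in> lip_ball" for g
    using wcomb_approx[of "\<phi> g" m g \<epsilon>' "\<psi> g" m' \<epsilon>' a b] m m' that by (simp add: distrib_right)
  then have "\<forall>g\<in>lip_ball. \<bar>(a * \<phi> g + b * \<psi> g) - wsum (wcomb a m b m') g\<bar> \<le> \<epsilon>"
    using \<epsilon>' by (meson order_trans)
  then show "\<exists>m. \<forall>g\<in>lip_ball. \<bar>a * \<phi> g + b * \<psi> g - wsum m g\<bar> \<le> \<epsilon>" by blast
qed

lemma free_space_bdd_above:
  assumes "\<phi> \<in> free_space"
  shows "bdd_above {\<bar>\<phi> g\<bar> | g. g \<in> Lip0 \<and> lipnorm g \<le> 1}"
proof -
  obtain m where m: "\<forall>g\<in>lip_ball. \<bar>\<phi> g - wsum m g\<bar> \<le> 1"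
    using free_space_approx[OF assms zero_less_one] by blast
  have "\<bar>\<phi> g\<bar> \<le> 1 + (\<Sum>(a, x) \<leftarrow> m. \<bar>a\<bar> * norm x)" if "g \<in> lip_ball" for g
  proof -
    have "\<bar>\<phi> g - wsum m g\<bar> \<le> 1" using m that by blast
    then show ?thesis using wsum_lip_ball_abs_le[OF that, of m] by arith
  qed
  then show ?thesis
    unfolding lip_ball_def by (intro bdd_aboveI[where M="1 + (\<Sum>(a, x) \<leftarrow> m. \<bar>a\<bar> * norm x)"]) auto
qed

lemma dualnorm_ge: "\<phi> \<in> free_space \<Longrightarrow> g \<in> lip_ball \<Longrightarrow> \<bar>\<phi> g\<bar> \<le> dualnorm \<phi>"
  unfolding dualnorm_def using free_space_bdd_above by (intro cSup_upper) (auto simp: lip_ball_def)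

lemma dualnorm_nonneg: "\<phi> \<in> free_space \<Longrightarrow> 0 \<le> dualnorm \<phi>"
  using dualnorm_ge[OF _ zero_in_lip_ball] by fastforce

lemma dualnorm_le: "(\<And>g. g \<in> lip_ball \<Longrightarrow> \<bar>\<phi> g\<bar> \<le> B) \<Longrightarrow> dualnorm \<phi> \<le> B"
  unfolding dualnorm_def using zero_in_lip_ball unfolding lip_ball_def by (intro cSup_least) auto

lemma free_space_apply_zero:
  assumes "\<phi> \<in> free_space"
  shows "\<phi> (\<lambda>_. 0) = 0"
proof -
  have "\<bar>\<phi> (\<lambda>_. 0)\<bar> \<le> 0 + \<epsilon>" if \<epsilon>: "\<epsilon> > 0" for \<epsilon>
  proof -
    obtain m where "\<forall>g\<in>lip_ball. \<bar>\<phi> g - wsum m g\<bar> \<le> \<epsilon>"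
      using free_space_approx[OF assms \<epsilon>] by blast
    then have "\<bar>\<phi> (\<lambda>_. 0) - wsum m (\<lambda>_. 0)\<bar> \<le> \<epsilon>"
      using zero_in_lip_ball by blast
    then show ?thesis by simp
  qed
  then show ?thesis using field_le_epsilon[of "\<bar>\<phi> (\<lambda>_. 0)\<bar>" 0] by simp
qed

lemma free_space_nontrivial:
  fixes \<phi> :: "('a::real_normed_vector \<Rightarrow> real) \<Rightarrow> real"
  assumes "\<phi> \<in> free_space" and "dualnorm \<phi> \<noteq> 0"
  obtains x :: 'a where "x \<noteq> 0"
proof (rule ccontr)
  assume "\<not> thesis"
  with that have trivial: "\<And>x::'a. x = 0" by blast
  have "g = (\<lambda>_. 0)" if "g \<in> lip_ball" for g :: "'a \<Rightarrow> real"
  proof (rule ext)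
    fix x :: 'a
    have "g 0 = 0" using Lip0_zero[of g] that by (simp add: lip_ball_def)
    then show "g x = 0" using trivial[of x] by simp
  qed
  then have "dualnorm \<phi> \<le> 0"
    using free_space_apply_zero[OF assms(1)] by (intro dualnorm_le) auto
  then show False using assms dualnorm_nonneg by fastforce
qed

section \<open>Operators on the free space\<close>

lemma free_ops_lincomb:
  "T \<in> free_ops \<Longrightarrow> \<phi> \<in> free_space \<Longrightarrow> \<psi> \<in> free_space \<Longrightarrow>
    T (\<lambda>g. a * \<phi> g + b * \<psi> g) = a *\<^sub>R T \<phi> + b *\<^sub>R T \<psi>"
  unfolding free_ops_def by blast

lemma free_ops_bounded:
  assumes "T \<in> free_ops"
  obtains C where "C \<ge> 0" and "\<And>\<phi>. \<phi> \<in> free_space \<Longrightarrow> norm (T \<phi>) \<le> C * dualnorm \<phi>"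
proof -
  obtain C where C: "\<forall>\<phi>\<in>free_space. norm (T \<phi>) \<le> C * dualnorm \<phi>"
    using assms unfolding free_ops_def by blast
  have "norm (T \<phi>) \<le> \<bar>C\<bar> * dualnorm \<phi>" if "\<phi> \<in> free_space" for \<phi>
    using C that dualnorm_nonneg[OF that] by (meson abs_ge_self mult_right_mono order_trans)
  then show ?thesis using that[of "\<bar>C\<bar>"] by simp
qed

lemma free_ops_diff:
  assumes S: "S \<in> free_ops" and T: "T \<in> free_ops"
  shows "(\<lambda>\<phi>. S \<phi> - T \<phi>) \<in> free_ops"
proof -
  obtain C D where C: "\<And>\<phi>. \<phi> \<in> free_space \<Longrightarrow> norm (S \<phi>) \<le> C * dualnorm \<phi>"
    and D: "\<And>\<phi>. \<phi> \<in> free_space \<Longrightarrow> norm (T \<phi>) \<le> D * dualnorm \<phi>"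
    using free_ops_bounded[OF S] free_ops_bounded[OF T] by metis
  have "norm (S \<phi> - T \<phi>) \<le> (C + D) * dualnorm \<phi>" if "\<phi> \<in> free_space" for \<phi>
    using norm_triangle_ineq4[of "S \<phi>" "T \<phi>"] C[OF that] D[OF that] by (simp add: distrib_right)
  then have "\<forall>\<phi>\<in>free_space. norm (S \<phi> - T \<phi>) \<le> (C + D) * dualnorm \<phi>" by blast
  moreover have "S (\<lambda>g. a * \<phi> g + b * \<psi> g) - T (\<lambda>g. a * \<phi> g + b * \<psi> g)
      = a *\<^sub>R (S \<phi> - T \<phi>) + b *\<^sub>R (S \<psi> - T \<psi>)"
    if "\<phi> \<in> free_space" "\<psi> \<in> free_space" for \<phi> \<psi> a b
    using free_ops_lincomb[OF S that] free_ops_lincomb[OF T that] by (simp add: algebra_simps)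
  ultimately show ?thesis
    unfolding free_ops_def by blast
qed

lemma free_ops_zero:
  assumes "T \<in> free_ops"
  shows "T (\<lambda>_. 0) = 0"
  using free_ops_lincomb[OF assms dirac_in_free_space dirac_in_free_space, where a=0 and b=0] by simp

lemma free_ops_dirac_comb:
  assumes "T \<in> free_ops"
  shows "T (dirac_comb m) = wsum m (\<lambda>x. T (dirac x))"
proof (induction m)
  case Nil
  show ?case by (simp add: dirac_comb_Nil free_ops_zero[OF assms])
next
  case (Cons p m)
  obtain a x where p: "p = (a, x)" by fastforce
  then have "dirac_comb (p # m) = (\<lambda>g. a * dirac x g + 1 * dirac_comb m g)"
    by (simp add: dirac_comb_def fun_eq_iff)
  then show ?case
    using free_ops_lincomb[OF assms dirac_in_free_space dirac_comb_in_free_space, where b=1] Cons.IH p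
    by simp
qed

lemma free_opnorm_bdd_above:
  assumes "T \<in> free_ops"
  shows "bdd_above (insert 0 {norm (T \<phi>) | \<phi>. \<phi> \<in> free_space \<and> dualnorm \<phi> \<le> 1})"
proof -
  obtain C where "C \<ge> 0" and C: "\<And>\<phi>. \<phi> \<in> free_space \<Longrightarrow> norm (T \<phi>) \<le> C * dualnorm \<phi>"
    using free_ops_bounded[OF assms] by blast
  have "norm (T \<phi>) \<le> C" if "\<phi> \<in> free_space" "dualnorm \<phi> \<le> 1" for \<phi>
    using C[OF that(1)] \<open>C \<ge> 0\<close> that(2) by (meson mult_left_le order_trans)
  then show ?thesis using \<open>C \<ge> 0\<close> by (intro bdd_aboveI[of _ C]) auto
qed

lemma free_opnorm_nonneg: "T \<in> free_ops \<Longrightarrow> 0 \<le> free_opnorm T"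
  unfolding free_opnorm_def by (intro cSup_upper free_opnorm_bdd_above) auto

lemma norm_le_free_opnorm:
  "T \<in> free_ops \<Longrightarrow> \<phi> \<in> free_space \<Longrightarrow> dualnorm \<phi> \<le> 1 \<Longrightarrow> norm (T \<phi>) \<le> free_opnorm T"
  unfolding free_opnorm_def by (intro cSup_upper free_opnorm_bdd_above) auto

lemma free_ops_dirac_lipschitz:
  assumes T: "T \<in> free_ops"
  shows "norm (T (dirac x) - T (dirac y)) \<le> free_opnorm T * norm (x - y)"
proof (cases "x = y")
  case False
  define r where "r = norm (x - y)"
  have "r > 0" using False unfolding r_def by simp
  define \<mu> where "\<mu> = dirac_comb [(1 / r, x), (- 1 / r, y)]"
  have "\<bar>\<mu> g\<bar> \<le> 1" if "g \<in> lip_ball" for g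
  proof -
    have "\<mu> g = (g x - g y) / r"
      using that by (simp add: \<mu>_def dirac_comb_apply lip_ball_def diff_divide_distrib)
    then show ?thesis
      using lip_ball_abs_diff_le[OF that, of x y] \<open>r > 0\<close> unfolding r_def by (simp add: abs_divide)
  qed
  then have "norm (T \<mu>) \<le> free_opnorm T"
    by (intro norm_le_free_opnorm[OF T] dualnorm_le) (auto simp: \<mu>_def dirac_comb_in_free_space)
  moreover have "T \<mu> = (1 / r) *\<^sub>R (T (dirac x) - T (dirac y))"
    unfolding \<mu>_def free_ops_dirac_comb[OF T] by (simp add: algebra_simps)
  ultimately show ?thesis
    using \<open>r > 0\<close> unfolding r_def by (simp add: divide_le_eq mult.commute)
qed simp

lemma free_ops_comp_dirac_Lip0:
  assumes "T \<in> free_ops"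
  shows "(\<lambda>x. T (dirac x)) \<in> Lip0"
proof (rule Lip0I)
  show "norm (T (dirac x) - T (dirac y)) \<le> free_opnorm T * norm (x - y)" for x y
    by (rule free_ops_dirac_lipschitz[OF assms])
  show "T (dirac 0) = 0"
    using free_ops_zero[OF assms] by (simp add: dirac_zero)
qed

lemma lipnorm_comp_dirac_le: "T \<in> free_ops \<Longrightarrow> lipnorm (\<lambda>x. T (dirac x)) \<le> free_opnorm T"
  by (intro lipnorm_le free_ops_dirac_lipschitz free_opnorm_nonneg)

lemma norm_free_ops_diff_dirac_comb_le:
  assumes T: "T \<in> free_ops"
    and C: "\<And>\<psi>. \<psi> \<in> free_space \<Longrightarrow> norm (T \<psi>) \<le> C * dualnorm \<psi>" and "C \<ge> 0"
    and \<phi>: "\<phi> \<in> free_space" and m: "\<forall>g\<in>lip_ball. \<bar>\<phi> g - wsum m g\<bar> \<le> \<epsilon>"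
  shows "norm (T \<phi> - T (dirac_comb m)) \<le> C * \<epsilon>"
proof -
  let ?d = "\<lambda>g. 1 * \<phi> g + (- 1) * dirac_comb m g"
  have d: "?d \<in> free_space"
    by (rule free_space_lincomb[OF \<phi> dirac_comb_in_free_space])
  have "dualnorm ?d \<le> \<epsilon>"
    using m by (intro dualnorm_le) (simp add: dirac_comb_apply lip_ball_def)
  then have "norm (T ?d) \<le> C * \<epsilon>"
    using C[OF d] \<open>C \<ge> 0\<close> by (meson mult_left_mono order_trans)
  moreover have "T ?d = T \<phi> - T (dirac_comb m)"
    using free_ops_lincomb[OF T \<phi> dirac_comb_in_free_space, where a=1 and b="-1"] by simp
  ultimately show ?thesis by simp
qed

lemma free_space_apply_comp_dirac:
  assumes T: "T \<in> free_ops" and \<phi>: "\<phi> \<in> free_space" and F: "bounded_linear F"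
    and h: "(\<lambda>x. F (T (dirac x))) \<in> lip_ball"
  shows "\<phi> (\<lambda>x. F (T (dirac x))) = F (T \<phi>)"
proof -
  let ?h = "\<lambda>x. F (T (dirac x))"
  obtain K where K: "\<And>v. norm (F v) \<le> norm v * K" and "K > 0"
    using bounded_linear.pos_bounded[OF F] by blast
  obtain C where "C \<ge> 0" and C: "\<And>\<phi>. \<phi> \<in> free_space \<Longrightarrow> norm (T \<phi>) \<le> C * dualnorm \<phi>"
    using free_ops_bounded[OF T] by blast
  have "\<bar>\<phi> ?h - F (T \<phi>)\<bar> \<le> 0 + e" if "e > 0" for e
  proof -
    define \<epsilon> where "\<epsilon> = e / (1 + K * C)"
    have "1 + K * C > 0" using \<open>K > 0\<close> \<open>C \<ge> 0\<close> by (simp add: add_pos_nonneg)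
    then have "\<epsilon> > 0" using \<open>e > 0\<close> unfolding \<epsilon>_def by simp
    have "\<epsilon> + K * C * \<epsilon> = \<epsilon> * (1 + K * C)" by (simp add: algebra_simps)
    also have "\<dots> = e" using \<open>1 + K * C > 0\<close> unfolding \<epsilon>_def by simp
    finally have e_eq: "\<epsilon> + K * C * \<epsilon> = e" .
    obtain m where m: "\<forall>g\<in>lip_ball. \<bar>\<phi> g - wsum m g\<bar> \<le> \<epsilon>"
      using free_space_approx[OF \<phi> \<open>\<epsilon> > 0\<close>] by blast
    have h_Lip0: "?h \<in> Lip0" using h by (simp add: lip_ball_def)
    have "dirac_comb m ?h = F (T (dirac_comb m))"
      using h_Lip0 by (simp add: dirac_comb_apply free_ops_dirac_comb[OF T] linear_wsum[OF bounded_linear.linear[OF F]])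
    moreover have "\<bar>\<phi> ?h - dirac_comb m ?h\<bar> \<le> \<epsilon>"
      using m h h_Lip0 by (simp add: dirac_comb_apply)
    moreover have "\<bar>F (T \<phi>) - F (T (dirac_comb m))\<bar> \<le> K * C * \<epsilon>"
    proof -
      have "norm (F (T \<phi> - T (dirac_comb m))) \<le> norm (T \<phi> - T (dirac_comb m)) * K"
        by (rule K)
      also have "\<dots> \<le> C * \<epsilon> * K"
        using norm_free_ops_diff_dirac_comb_le[OF T C \<open>C \<ge> 0\<close> \<phi> m] \<open>K > 0\<close> by simp
      finally show ?thesis by (simp add: linear_simps(2)[OF F] algebra_simps)
    qed
    ultimately show ?thesis using e_eq by linarith
  qed
  then have "\<bar>\<phi> ?h - F (T \<phi>)\<bar> \<le> 0" by (rule field_le_epsilon)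
  then show ?thesis by simp
qed

lemma functional_le_lipnorm_comp_dirac:
  assumes T: "T \<in> free_ops" and \<mu>: "\<mu> \<in> free_space" and F: "bounded_linear F"
  shows "F (T \<mu>) \<le> lipnorm (\<lambda>x. F (T (dirac x))) * dualnorm \<mu>"
proof -
  let ?h = "\<lambda>x. F (T (dirac x))"
  define L where "L = lipnorm ?h"
  have h: "?h \<in> Lip0"
    by (rule Lip0_bounded_linear_comp[OF F free_ops_comp_dirac_Lip0[OF T]])
  show ?thesis
  proof (cases "L = 0")
    case True
    have "?h x = 0" for x
      using Lip0_norm_diff_le[OF h, of x 0] Lip0_zero[OF h] True unfolding L_def by simp
    then have "?h = (\<lambda>_. 0)" by blast
    then have "F (T \<mu>) = \<mu> (\<lambda>_. 0)"
      using free_space_apply_comp_dirac[OF T \<mu> F] zero_in_lip_ball by metis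
    then show ?thesis using free_space_apply_zero[OF \<mu>] True unfolding L_def by simp
  next
    case False
    then have "L > 0" using lipnorm_nonneg[OF h] unfolding L_def by simp
    have F': "bounded_linear (\<lambda>v. F v / L)"
      using bounded_linear_compose[OF bounded_linear_divide F] .
    have "(\<lambda>x. F (T (dirac x)) / L) \<in> lip_ball"
    proof (rule lip_ballI)
      show "\<bar>?h x / L - ?h y / L\<bar> \<le> norm (x - y)" for x y
        using Lip0_norm_diff_le[OF h, of x y] \<open>L > 0\<close>
        unfolding L_def by (simp add: diff_divide_distrib[symmetric] abs_divide divide_le_eq mult.commute)
      show "?h 0 / L = 0" using Lip0_zero[OF h] by simp
    qed
    then have "\<mu> (\<lambda>x. F (T (dirac x)) / L) = F (T \<mu>) / L"
      by (rule free_space_apply_comp_dirac[OF T \<mu> F'])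
    then have "F (T \<mu>) / L \<le> dualnorm \<mu>"
      using dualnorm_ge[OF \<mu> \<open>(\<lambda>x. F (T (dirac x)) / L) \<in> lip_ball\<close>] abs_ge_self
      by (metis order_trans)
    then show ?thesis
      using \<open>L > 0\<close> unfolding L_def by (simp add: divide_le_eq mult.commute)
  qed
qed

lemma lipnorm_diff_comp_dirac_le:
  assumes S: "S \<in> free_ops" and T: "T \<in> free_ops"
  shows "lipnorm (\<lambda>x. T (dirac x) - S (dirac x)) \<le> free_opnorm (\<lambda>\<phi>. S \<phi> - T \<phi>)"
proof -
  let ?R = "\<lambda>\<phi>. S \<phi> - T \<phi>"
  have R: "?R \<in> free_ops" by (rule free_ops_diff[OF S T])
  have "norm (T (dirac x) - S (dirac x) - (T (dirac y) - S (dirac y))) \<le> free_opnorm ?R * norm (x - y)"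
    for x y
    using free_ops_dirac_lipschitz[OF R, of x y] by (simp add: norm_minus_commute algebra_simps)
  then show ?thesis by (rule lipnorm_le[OF _ free_opnorm_nonneg[OF R]])
qed

section \<open>Linearization of Lipschitz maps\<close>

lemma norm_wsum_le:
  assumes f: "f \<in> Lip0" and bound: "\<forall>g\<in>lip_ball. \<bar>wsum m g\<bar> \<le> e"
  shows "norm (wsum m f) \<le> lipnorm f * e"
proof (cases "lipnorm f = 0")
  case True
  have "f x = 0" for x
    using Lip0_norm_diff_le[OF f, of x 0] Lip0_zero[OF f] True by simp
  then have "f = (\<lambda>_. 0)" by blast
  then have "wsum m f = 0" by simp
  then show ?thesis using True by simp
next
  case False
  define L where "L = lipnorm f"
  have "L > 0" using False lipnorm_nonneg[OF f] unfolding L_def by simp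
  obtain F where F: "bounded_linear F" and F_le: "\<And>v. \<bar>F v\<bar> \<le> norm v"
    and F_norm: "F (wsum m f) = norm (wsum m f)"
    using norming_functional by blast
  have FL: "bounded_linear (\<lambda>v. F v / L)"
    using bounded_linear_compose[OF bounded_linear_divide F] .
  have "(\<lambda>x. F (f x) / L) \<in> lip_ball"
  proof (rule lip_ballI)
    show "\<bar>F (f x) / L - F (f y) / L\<bar> \<le> norm (x - y)" for x y
    proof -
      have "\<bar>F (f x) / L - F (f y) / L\<bar> = \<bar>F (f x - f y)\<bar> / L"
        using \<open>L > 0\<close> by (simp add: linear_simps(2)[OF F] diff_divide_distrib[symmetric] abs_divide)
      also have "\<dots> \<le> norm (f x - f y) / L"
        using F_le \<open>L > 0\<close> by (simp add: divide_right_mono)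
      also have "\<dots> \<le> norm (x - y)"
        using Lip0_norm_diff_le[OF f, of x y] \<open>L > 0\<close> unfolding L_def by (simp add: divide_le_eq mult.commute)
      finally show ?thesis .
    qed
    show "F (f 0) / L = 0" using Lip0_zero[OF f] linear_simps(3)[OF F] by simp
  qed
  then have "\<bar>wsum m (\<lambda>x. F (f x) / L)\<bar> \<le> e"
    using bound by blast
  moreover have "wsum m (\<lambda>x. F (f x) / L) = norm (wsum m f) / L"
    using linear_wsum[OF bounded_linear.linear[OF FL], of m f] F_norm by simp
  ultimately show ?thesis
    using \<open>L > 0\<close> unfolding L_def by (simp add: divide_le_eq mult.commute)
qed

lemma norm_wsum_diff_le:
  assumes "f \<in> Lip0" and "\<forall>g\<in>lip_ball. \<bar>wsum m g - wsum m' g\<bar> \<le> e"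
  shows "norm (wsum m f - wsum m' f) \<le> lipnorm f * e"
  using norm_wsum_le[OF assms(1), of "wcomb 1 m (-1) m'" e] assms(2) by simp

(* Only meaningful for phi in the free space; otherwise the choice is arbitrary. *)
definition approx_weights :: "(('a \<Rightarrow> real) \<Rightarrow> real) \<Rightarrow> nat \<Rightarrow> (real \<times> 'a::real_normed_vector) list" where
  "approx_weights \<phi> n = (SOME m. \<forall>g\<in>lip_ball. \<bar>\<phi> g - wsum m g\<bar> \<le> inverse (real (Suc n)))"

lemma approx_weights:
  assumes "\<phi> \<in> free_space" and "g \<in> lip_ball"
  shows "\<bar>\<phi> g - wsum (approx_weights \<phi> n) g\<bar> \<le> inverse (real (Suc n))"
proof -
  have "inverse (real (Suc n)) > 0" by simp
  then obtain m where "\<forall>g\<in>lip_ball. \<bar>\<phi> g - wsum m g\<bar> \<le> inverse (real (Suc n))"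
    using free_space_approx[OF assms(1)] by blast
  then have "\<forall>g\<in>lip_ball. \<bar>\<phi> g - wsum (approx_weights \<phi> n) g\<bar> \<le> inverse (real (Suc n))"
    unfolding approx_weights_def by (rule someI)
  then show ?thesis using assms(2) by blast
qed

(* The sequence converges (Y is complete) since norm_wsum_le controls the values of f on
   finite combinations by the values of the functionals in the unit ball. *)
definition linearization :: "('a::real_normed_vector \<Rightarrow> 'b::real_normed_vector) \<Rightarrow> (('a \<Rightarrow> real) \<Rightarrow> real) \<Rightarrow> 'b" where
  "linearization f \<phi> = lim (\<lambda>n. wsum (approx_weights \<phi> n) f)"

lemma linearization_LIMSEQ:
  fixes f :: "'a::real_normed_vector \<Rightarrow> 'b::banach"
  assumes f: "f \<in> Lip0" and \<phi>: "\<phi> \<in> free_space"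
  shows "(\<lambda>n. wsum (approx_weights \<phi> n) f) \<longlonglongrightarrow> linearization f \<phi>"
proof -
  let ?X = "\<lambda>n. wsum (approx_weights \<phi> n) f"
  have dist_le: "dist (?X m) (?X n) \<le> lipnorm f * inverse (real (Suc m)) + lipnorm f * inverse (real (Suc n))"
    for m n
  proof -
    have "\<forall>g\<in>lip_ball. \<bar>wsum (approx_weights \<phi> m) g - wsum (approx_weights \<phi> n) g\<bar>
        \<le> inverse (real (Suc m)) + inverse (real (Suc n))"
    proof
      fix g :: "'a \<Rightarrow> real" assume "g \<in> lip_ball"
      then show "\<bar>wsum (approx_weights \<phi> m) g - wsum (approx_weights \<phi> n) g\<bar>
          \<le> inverse (real (Suc m)) + inverse (real (Suc n))"
        using approx_weights[OF \<phi> \<open>g \<in> lip_ball\<close>, of m] approx_weights[OF \<phi> \<open>g \<in> lip_ball\<close>, of n]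
        by arith
    qed
    from norm_wsum_diff_le[OF f this] show ?thesis
      by (simp add: dist_norm distrib_left)
  qed
  have "(\<lambda>n. lipnorm f * inverse (real (Suc n))) \<longlonglongrightarrow> 0"
    by (intro tendsto_mult_right_zero LIMSEQ_inverse_real_of_nat)
  have "Cauchy ?X"
  proof (rule metric_CauchyI)
    fix e :: real assume "e > 0"
    have "(\<lambda>n. lipnorm f * inverse (real (Suc n))) \<longlonglongrightarrow> 0"
      by (intro tendsto_mult_right_zero LIMSEQ_inverse_real_of_nat)
    then obtain N where N: "\<And>n. n \<ge> N \<Longrightarrow> lipnorm f * inverse (real (Suc n)) < e / 2"
      using order_tendstoD(2)[of _ 0 sequentially "e / 2"] \<open>e > 0\<close>
      unfolding eventually_sequentially by auto
    have "dist (?X m) (?X n) < e" if "m \<ge> N" "n \<ge> N" for m n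
      using dist_le[of m n] N[OF that(1)] N[OF that(2)] by simp
    then show "\<exists>N. \<forall>m\<ge>N. \<forall>n\<ge>N. dist (?X m) (?X n) < e" by blast
  qed
  then show ?thesis
    unfolding linearization_def by (simp add: Cauchy_convergent_iff convergent_LIMSEQ_iff)
qed

lemma norm_wsum_linearization_le:
  fixes f :: "'a::real_normed_vector \<Rightarrow> 'b::banach"
  assumes f: "f \<in> Lip0" and \<phi>: "\<phi> \<in> free_space"
    and m: "\<forall>g\<in>lip_ball. \<bar>\<phi> g - wsum m g\<bar> \<le> e"
  shows "norm (wsum m f - linearization f \<phi>) \<le> lipnorm f * e"
proof -
  have "norm (wsum m f - wsum (approx_weights \<phi> n) f) \<le> lipnorm f * (e + inverse (real (Suc n)))" for n
  proof (rule norm_wsum_diff_le[OF f])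
    show "\<forall>g\<in>lip_ball. \<bar>wsum m g - wsum (approx_weights \<phi> n) g\<bar> \<le> e + inverse (real (Suc n))"
    proof
      fix g :: "'a \<Rightarrow> real" assume "g \<in> lip_ball"
      then show "\<bar>wsum m g - wsum (approx_weights \<phi> n) g\<bar> \<le> e + inverse (real (Suc n))"
        using bspec[OF m \<open>g \<in> lip_ball\<close>] approx_weights[OF \<phi> \<open>g \<in> lip_ball\<close>, of n] by arith
    qed
  qed
  moreover have "(\<lambda>n. norm (wsum m f - wsum (approx_weights \<phi> n) f)) \<longlonglongrightarrow> norm (wsum m f - linearization f \<phi>)"
    by (intro tendsto_intros linearization_LIMSEQ[OF f \<phi>])
  moreover have "(\<lambda>n. lipnorm f * (e + inverse (real (Suc n)))) \<longlonglongrightarrow> lipnorm f * (e + 0)"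
    by (intro tendsto_intros LIMSEQ_inverse_real_of_nat)
  ultimately show ?thesis
    by (intro LIMSEQ_le) auto
qed

lemma wsum_LIMSEQ_linearization:
  fixes f :: "'a::real_normed_vector \<Rightarrow> 'b::banach"
  assumes f: "f \<in> Lip0" and \<phi>: "\<phi> \<in> free_space"
    and ms: "\<And>n. \<forall>g\<in>lip_ball. \<bar>\<phi> g - wsum (ms n) g\<bar> \<le> e n" and "e \<longlonglongrightarrow> 0"
  shows "(\<lambda>n. wsum (ms n) f) \<longlonglongrightarrow> linearization f \<phi>"
proof (rule LIM_zero_cancel)
  have "\<forall>n. norm (wsum (ms n) f - linearization f \<phi>) \<le> lipnorm f * e n"
    using norm_wsum_linearization_le[OF f \<phi> ms] by blast
  moreover have "(\<lambda>n. lipnorm f * e n) \<longlonglongrightarrow> 0"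
    using tendsto_mult_right_zero[OF \<open>e \<longlonglongrightarrow> 0\<close>] .
  ultimately show "(\<lambda>n. wsum (ms n) f - linearization f \<phi>) \<longlonglongrightarrow> 0"
    by (rule Lim_null_comparison[OF always_eventually])
qed

lemma linearization_dirac:
  fixes f :: "'a::real_normed_vector \<Rightarrow> 'b::banach"
  assumes f: "f \<in> Lip0"
  shows "linearization f (dirac x) = f x"
proof -
  have "\<forall>g\<in>lip_ball. \<bar>dirac x g - wsum [(1, x)] g\<bar> \<le> 0"
    by (simp add: dirac_def lip_ball_def)
  from norm_wsum_linearization_le[OF f dirac_in_free_space this] show ?thesis by simp
qed

lemma linearization_lincomb:
  fixes f :: "'a::real_normed_vector \<Rightarrow> 'b::banach"
  assumes f: "f \<in> Lip0" and \<phi>: "\<phi> \<in> free_space" and \<psi>: "\<psi> \<in> free_space"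
  shows "linearization f (\<lambda>g. a * \<phi> g + b * \<psi> g) = a *\<^sub>R linearization f \<phi> + b *\<^sub>R linearization f \<psi>"
proof (rule LIMSEQ_unique)
  let ?ms = "\<lambda>n. wcomb a (approx_weights \<phi> n) b (approx_weights \<psi> n)"
  have "\<forall>g\<in>lip_ball. \<bar>(a * \<phi> g + b * \<psi> g) - wsum (?ms n) g\<bar> \<le> (\<bar>a\<bar> + \<bar>b\<bar>) * inverse (real (Suc n))" for n
  proof
    fix g :: "'a \<Rightarrow> real" assume "g \<in> lip_ball"
    then show "\<bar>(a * \<phi> g + b * \<psi> g) - wsum (?ms n) g\<bar> \<le> (\<bar>a\<bar> + \<bar>b\<bar>) * inverse (real (Suc n))"
      using wcomb_approx[OF approx_weights[OF \<phi> \<open>g \<in> lip_ball\<close>] approx_weights[OF \<psi> \<open>g \<in> lip_ball\<close>]]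
      by (simp add: distrib_right)
  qed
  moreover have "(\<lambda>n. (\<bar>a\<bar> + \<bar>b\<bar>) * inverse (real (Suc n))) \<longlonglongrightarrow> 0"
    by (intro tendsto_mult_right_zero LIMSEQ_inverse_real_of_nat)
  ultimately show "(\<lambda>n. wsum (?ms n) f) \<longlonglongrightarrow> linearization f (\<lambda>g. a * \<phi> g + b * \<psi> g)"
    by (rule wsum_LIMSEQ_linearization[OF f free_space_lincomb[OF \<phi> \<psi>]])
  show "(\<lambda>n. wsum (?ms n) f) \<longlonglongrightarrow> a *\<^sub>R linearization f \<phi> + b *\<^sub>R linearization f \<psi>"
    unfolding wsum_wcomb by (intro tendsto_intros linearization_LIMSEQ f \<phi> \<psi>)
qed

lemma norm_linearization_le:
  fixes f :: "'a::real_normed_vector \<Rightarrow> 'b::banach"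
  assumes f: "f \<in> Lip0" and \<phi>: "\<phi> \<in> free_space"
  shows "norm (linearization f \<phi>) \<le> lipnorm f * dualnorm \<phi>"
proof -
  have "norm (wsum (approx_weights \<phi> n) f) \<le> lipnorm f * (dualnorm \<phi> + inverse (real (Suc n)))" for n
  proof (rule norm_wsum_le[OF f])
    show "\<forall>g\<in>lip_ball. \<bar>wsum (approx_weights \<phi> n) g\<bar> \<le> dualnorm \<phi> + inverse (real (Suc n))"
    proof
      fix g :: "'a \<Rightarrow> real" assume "g \<in> lip_ball"
      then show "\<bar>wsum (approx_weights \<phi> n) g\<bar> \<le> dualnorm \<phi> + inverse (real (Suc n))"
        using approx_weights[OF \<phi> \<open>g \<in> lip_ball\<close>, of n] dualnorm_ge[OF \<phi> \<open>g \<in> lip_ball\<close>] by arith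
    qed
  qed
  moreover have "(\<lambda>n. norm (wsum (approx_weights \<phi> n) f)) \<longlonglongrightarrow> norm (linearization f \<phi>)"
    by (intro tendsto_intros linearization_LIMSEQ[OF f \<phi>])
  moreover have "(\<lambda>n. lipnorm f * (dualnorm \<phi> + inverse (real (Suc n)))) \<longlonglongrightarrow> lipnorm f * (dualnorm \<phi> + 0)"
    by (intro tendsto_intros LIMSEQ_inverse_real_of_nat)
  ultimately show ?thesis
    by (intro LIMSEQ_le) auto
qed

lemma linearization_in_free_ops:
  fixes f :: "'a::real_normed_vector \<Rightarrow> 'b::banach"
  assumes "f \<in> Lip0"
  shows "linearization f \<in> free_ops"
  unfolding free_ops_def
proof (intro CollectI conjI ballI allI exI)
  show "linearization f (\<lambda>g. a * \<phi> g + b * \<psi> g) = a *\<^sub>R linearization f \<phi> + b *\<^sub>R linearization f \<psi>"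
    if "\<phi> \<in> free_space" "\<psi> \<in> free_space" for \<phi> \<psi> a b
    using linearization_lincomb[OF assms that] .
  show "norm (linearization f \<phi>) \<le> lipnorm f * dualnorm \<phi>" if "\<phi> \<in> free_space" for \<phi>
    using norm_linearization_le[OF assms that] .
qed

section \<open>Uniform convexity and weak norm attainment\<close>

lemma uniformly_convex_Cauchy:
  fixes Q :: "nat \<Rightarrow> 'b::real_normed_vector"
  assumes UC: "uniformly_convex_space TYPE('b)" and "N > 0"
    and Q_le: "\<And>n. norm (Q n) \<le> N"
    and F: "bounded_linear F" and F_le: "\<And>v. F v \<le> norm v"
    and F_Q: "(\<lambda>n. F (Q n)) \<longlonglongrightarrow> N"
  shows "Cauchy Q"
proof (rule metric_CauchyI)
  fix e :: real assume "e > 0"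
  then have "e / N > 0" using \<open>N > 0\<close> by simp
  then obtain \<delta> where "\<delta> > 0" and \<delta>: "\<And>x y::'b. norm x \<le> 1 \<Longrightarrow> norm y \<le> 1 \<Longrightarrow>
      norm (x - y) \<ge> e / N \<Longrightarrow> norm ((1/2) *\<^sub>R (x + y)) \<le> 1 - \<delta>"
    using UC unfolding uniformly_convex_space_def by blast
  have "N - N * \<delta> < N" using \<open>N > 0\<close> \<open>\<delta> > 0\<close> by simp
  then obtain n0 where n0: "\<And>n. n \<ge> n0 \<Longrightarrow> N - N * \<delta> < F (Q n)"
    using order_tendstoD(1)[OF F_Q] unfolding eventually_sequentially by blast
  have "dist (Q m) (Q n) < e" if "m \<ge> n0" "n \<ge> n0" for m n
  proof (rule ccontr)
    assume "\<not> dist (Q m) (Q n) < e"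
    then have far: "e \<le> norm (Q m - Q n)" by (simp add: dist_norm)
    let ?x = "(1 / N) *\<^sub>R Q m" and ?y = "(1 / N) *\<^sub>R Q n"
    have "norm ?x \<le> 1" "norm ?y \<le> 1"
      using Q_le[of m] Q_le[of n] \<open>N > 0\<close> by (simp_all add: divide_le_eq)
    moreover have "norm (?x - ?y) \<ge> e / N"
      using far \<open>N > 0\<close> by (simp add: scaleR_diff_right[symmetric] divide_right_mono)
    ultimately have "norm ((1/2) *\<^sub>R (?x + ?y)) \<le> 1 - \<delta>" by (rule \<delta>)
    moreover have "F ((1/2) *\<^sub>R (?x + ?y)) = (F (Q m) + F (Q n)) / (2 * N)"
      by (simp add: linear_simps[OF F] add_divide_distrib)
    moreover have "(F (Q m) + F (Q n)) / (2 * N) > 1 - \<delta>"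
      using n0[OF that(1)] n0[OF that(2)] \<open>N > 0\<close> by (simp add: field_simps)
    ultimately show False using F_le[of "(1/2) *\<^sub>R (?x + ?y)"] by linarith
  qed
  then show "\<exists>M. \<forall>m\<ge>M. \<forall>n\<ge>M. dist (Q m) (Q n) < e" by blast
qed

definition slope :: "('a::real_normed_vector \<Rightarrow> 'b::real_normed_vector) \<Rightarrow> 'a \<Rightarrow> 'a \<Rightarrow> 'b" where
  "slope g x y = (1 / norm (x - y)) *\<^sub>R (g x - g y)"

lemma lipAI:
  assumes "g \<in> Lip0" and "\<And>n. xs n \<noteq> ys n"
    and "(\<lambda>n. slope g (xs n) (ys n)) \<longlonglongrightarrow> z" and "norm z = lipnorm g"
  shows "g \<in> lipA"
  unfolding lipA_def using assms unfolding slope_def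
  by (intro CollectI conjI exI[of _ z] exI[of _ xs] exI[of _ ys]) auto

lemma norm_slope_le: "g \<in> Lip0 \<Longrightarrow> x \<noteq> y \<Longrightarrow> norm (slope g x y) \<le> lipnorm g"
  using Lip0_norm_diff_le[of g x y] by (simp add: slope_def divide_le_eq mult.commute)

lemma less_functional_slopeE:
  assumes g: "g \<in> Lip0" and F: "bounded_linear F"
    and "0 \<le> c" and "c < lipnorm (\<lambda>x. F (g x))"
  obtains x y where "x \<noteq> y" and "c < F (slope g x y)"
proof -
  obtain x y where "x \<noteq> y" and xy: "c * norm (x - y) < \<bar>F (g x) - F (g y)\<bar>"
    using less_lipnormE[OF Lip0_bounded_linear_comp[OF F g] assms(3,4)] by (metis real_norm_def)
  have "F (slope g x y) = (F (g x) - F (g y)) / norm (x - y)"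
    and "F (slope g y x) = (F (g y) - F (g x)) / norm (x - y)"
    unfolding slope_def by (simp_all add: linear_simps[OF F] norm_minus_commute)
  moreover have "c < \<bar>F (g x) - F (g y)\<bar> / norm (x - y)"
    using xy \<open>x \<noteq> y\<close> by (simp add: less_divide_eq)
  moreover have "\<bar>F (g x) - F (g y)\<bar> = F (g x) - F (g y) \<or> \<bar>F (g x) - F (g y)\<bar> = F (g y) - F (g x)"
    by linarith
  ultimately have "c < F (slope g x y) \<or> c < F (slope g y x)"
    by auto
  then show ?thesis using that \<open>x \<noteq> y\<close> by metis
qed

lemma lipA_if_lipnorm_eq_0:
  fixes f :: "'a::real_normed_vector \<Rightarrow> 'b::real_normed_vector" and x :: 'a
  assumes "f \<in> Lip0" and "lipnorm f = 0" and "x \<noteq> 0"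
  shows "f \<in> lipA"
proof -
  have "f y = 0" for y
    using Lip0_norm_diff_le[OF assms(1), of y 0] assms(2) Lip0_zero[OF assms(1)] by simp
  then have "(\<lambda>n. slope f x 0) \<longlonglongrightarrow> 0" by (simp add: slope_def)
  then show ?thesis using assms by (intro lipAI) auto
qed

lemma norming_slope_sequence:
  assumes g: "g \<in> Lip0" and F: "bounded_linear F" and F_le: "\<And>v. \<bar>F v\<bar> \<le> norm v"
    and norming: "lipnorm g \<le> lipnorm (\<lambda>x. F (g x))" and "lipnorm g > 0"
  obtains xs ys where "\<And>n. xs n \<noteq> ys n" and "(\<lambda>n. F (slope g (xs n) (ys n))) \<longlonglongrightarrow> lipnorm g"
proof -
  define L where "L = lipnorm g"
  define c where "c n = L - (L / 2) * inverse (real (Suc n))" for n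
  have "L > 0" using \<open>lipnorm g > 0\<close> unfolding L_def .
  have c_nonneg: "0 \<le> c n" and c_less_L: "c n < L" for n
  proof -
    have "0 < (L / 2) * inverse (real (Suc n))" using \<open>L > 0\<close> by simp
    moreover have "(L / 2) * inverse (real (Suc n)) \<le> L / 2"
      using \<open>L > 0\<close> by (intro mult_left_le) (auto simp: inverse_le_1_iff)
    ultimately show "0 \<le> c n" "c n < L" unfolding c_def by linarith+
  qed
  have "\<exists>x y. x \<noteq> y \<and> c n < F (slope g x y)" for n
  proof -
    have "c n < lipnorm (\<lambda>x. F (g x))"
      using c_less_L[of n] norming unfolding L_def by linarith
    then obtain x y where "x \<noteq> y" "c n < F (slope g x y)"
      by (rule less_functional_slopeE[OF g F c_nonneg])
    then show ?thesis by blast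
  qed
  then obtain xs ys where xy_ne: "\<And>n. xs n \<noteq> ys n" and c_less: "\<And>n. c n < F (slope g (xs n) (ys n))"
    by metis
  have lower: "\<forall>n. c n \<le> F (slope g (xs n) (ys n))"
    using c_less less_imp_le by blast
  have upper: "\<forall>n. F (slope g (xs n) (ys n)) \<le> L"
    using order_trans[OF abs_le_D1[OF F_le] norm_slope_le[OF g xy_ne]] unfolding L_def by blast
  have "c \<longlonglongrightarrow> L - (L / 2) * 0"
    unfolding c_def by (intro tendsto_intros LIMSEQ_inverse_real_of_nat)
  then have "c \<longlonglongrightarrow> L" by simp
  then have "(\<lambda>n. F (slope g (xs n) (ys n))) \<longlonglongrightarrow> L"
    using tendsto_sandwich[OF always_eventually[OF lower] always_eventually[OF upper] _ tendsto_const]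
    by blast
  then show ?thesis
    unfolding L_def by (rule that[OF xy_ne])
qed

lemma lipA_if_norming_functional:
  fixes g :: "'a::real_normed_vector \<Rightarrow> 'b::banach" and x0 :: 'a
  assumes UC: "uniformly_convex_space TYPE('b)" and g: "g \<in> Lip0"
    and F: "bounded_linear F" and F_le: "\<And>v. \<bar>F v\<bar> \<le> norm v"
    and norming: "lipnorm g \<le> lipnorm (\<lambda>x. F (g x))" and "x0 \<noteq> 0"
  shows "g \<in> lipA"
proof (cases "lipnorm g = 0")
  case True
  then show ?thesis by (rule lipA_if_lipnorm_eq_0[OF g _ \<open>x0 \<noteq> 0\<close>])
next
  case False
  then have "lipnorm g > 0" using lipnorm_nonneg[OF g] by simp
  then obtain xs ys where xy_ne: "\<And>n. xs n \<noteq> ys n"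
    and F_Q: "(\<lambda>n. F (slope g (xs n) (ys n))) \<longlonglongrightarrow> lipnorm g"
    using norming_slope_sequence[OF g F F_le norming] by blast
  define Q where "Q n = slope g (xs n) (ys n)" for n
  have Q_le: "norm (Q n) \<le> lipnorm g" for n
    unfolding Q_def using norm_slope_le[OF g xy_ne] .
  have F_le_norm: "F v \<le> norm v" for v
    using abs_le_D1[OF F_le] .
  have F_Q': "(\<lambda>n. F (Q n)) \<longlonglongrightarrow> lipnorm g"
    using F_Q unfolding Q_def .
  have norm_Q: "(\<lambda>n. norm (Q n)) \<longlonglongrightarrow> lipnorm g"
    using F_le_norm Q_le
    by (intro tendsto_sandwich[OF always_eventually always_eventually F_Q' tendsto_const] allI)
  have "Cauchy Q"
    by (rule uniformly_convex_Cauchy[OF UC \<open>lipnorm g > 0\<close> Q_le F F_le_norm F_Q'])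
  then obtain z where z: "Q \<longlonglongrightarrow> z"
    by (auto simp: Cauchy_convergent_iff convergent_def)
  have "norm z = lipnorm g"
    using LIMSEQ_unique[OF tendsto_norm[OF z] norm_Q] .
  with g xy_ne z show ?thesis
    unfolding Q_def by (rule lipAI)
qed

lemma comp_dirac_in_lipA_of_free_NA:
  fixes S :: "(('a::real_normed_vector \<Rightarrow> real) \<Rightarrow> real) \<Rightarrow> 'b::banach"
  assumes UC: "uniformly_convex_space TYPE('b)" and S: "S \<in> free_NA"
  shows "(\<lambda>x. S (dirac x)) \<in> lipA"
proof -
  obtain \<mu> where S_ops: "S \<in> free_ops" and \<mu>: "\<mu> \<in> free_space" "dualnorm \<mu> = 1"
    and attains: "norm (S \<mu>) = free_opnorm S"
    using S unfolding free_NA_def by blast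
  obtain F where F: "bounded_linear F" and F_le: "\<And>v. \<bar>F v\<bar> \<le> norm v"
    and F_S: "F (S \<mu>) = norm (S \<mu>)"
    using norming_functional by blast
  obtain x0 :: 'a where "x0 \<noteq> 0"
    using free_space_nontrivial[OF \<mu>(1)] \<mu>(2) by auto
  have "lipnorm (\<lambda>x. S (dirac x)) \<le> free_opnorm S"
    by (rule lipnorm_comp_dirac_le[OF S_ops])
  also have "\<dots> = F (S \<mu>)"
    using F_S attains by simp
  also have "\<dots> \<le> lipnorm (\<lambda>x. F (S (dirac x))) * dualnorm \<mu>"
    by (rule functional_le_lipnorm_comp_dirac[OF S_ops \<mu>(1) F])
  finally have "lipnorm (\<lambda>x. S (dirac x)) \<le> lipnorm (\<lambda>x. F (S (dirac x)))"
    using \<mu>(2) by simp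
  then show ?thesis
    by (rule lipA_if_norming_functional[OF UC free_ops_comp_dirac_Lip0[OF S_ops] F F_le _ \<open>x0 \<noteq> 0\<close>])
qed

theorem corollary3p9:
  assumes "uniformly_convex_space TYPE('b::banach)"
    and "\<forall>T \<in> (free_ops :: ((('a::banach \<Rightarrow> real) \<Rightarrow> real) \<Rightarrow> 'b) set). \<forall>\<epsilon>>0.
           \<exists>S\<in>free_NA. free_opnorm (\<lambda>\<phi>. S \<phi> - T \<phi>) < \<epsilon>"
  shows "\<forall>f \<in> (Lip0 :: ('a \<Rightarrow> 'b) set). \<forall>\<epsilon>>0. \<exists>g\<in>lipA. lipnorm (\<lambda>x. f x - g x) < \<epsilon>"
proof (intro ballI allI impI)
  fix f :: "'a \<Rightarrow> 'b" and \<epsilon> :: real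
  assume f: "f \<in> Lip0" and "\<epsilon> > 0"
  let ?T = "linearization f"
  have T: "?T \<in> free_ops" by (rule linearization_in_free_ops[OF f])
  obtain S where S: "S \<in> free_NA" and close: "free_opnorm (\<lambda>\<phi>. S \<phi> - ?T \<phi>) < \<epsilon>"
    using assms(2) T \<open>\<epsilon> > 0\<close> by blast
  have "S \<in> free_ops" using S unfolding free_NA_def by blast
  have "lipnorm (\<lambda>x. f x - S (dirac x)) = lipnorm (\<lambda>x. ?T (dirac x) - S (dirac x))"
    by (simp add: linearization_dirac[OF f])
  also have "\<dots> \<le> free_opnorm (\<lambda>\<phi>. S \<phi> - ?T \<phi>)"
    by (rule lipnorm_diff_comp_dirac_le[OF \<open>S \<in> free_ops\<close> T])
  finally show "\<exists>g\<in>lipA. lipnorm (\<lambda>x. f x - g x) < \<epsilon>"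
    using comp_dirac_in_lipA_of_free_NA[OF assms(1) S] close by force
qed

end
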